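(* Let $G=(V,E)$ be a finite simple undirected graph whose vertex set is partitioned into color classes $V_1,\dots,V_r$, and suppose $(V_{\eta_1},\dots,V_{\eta_r})$, $\eta\in\mathfrak{S}_r$, is a color perfect elimination ordering. Then for every $i\in[r]$ the induced subgraph $G[V_i]$ is a disjoint union of cliques.
   Context: An ordered partition $(V_{\eta_1},\dots,V_{\eta_r})$ is a color perfect elimination ordering (cpeo) if for every $i\in[r]$ and every $v\in V_{\eta_i}$, $v$ is simplicial in $G[V_{\eta_i}\cup\dots\cup V_{\eta_r}]$, i.e. its neighbours in that induced subgraph form a clique. *)

theory Defs
  imports Main "HOL-Combinatorics.Permutations"
begin

definition simple_graph :: "'a set \<Rightarrow> ('a \<Rightarrow> 'a \<Rightarrow> bool) \<Rightarrow> bool" where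
  "simple_graph V E \<longleftrightarrow> finite V \<and> (\<forall>u v. E u v \<longrightarrow> u \<in> V \<and> v \<in> V)
     \<and> (\<forall>u v. E u v \<longrightarrow> E v u) \<and> (\<forall>v. \<not> E v v)"

definition is_clique :: "('a \<Rightarrow> 'a \<Rightarrow> bool) \<Rightarrow> 'a set \<Rightarrow> bool" where
  "is_clique E K \<longleftrightarrow> (\<forall>u\<in>K. \<forall>w\<in>K. u \<noteq> w \<longrightarrow> E u w)"

definition simplicial_in :: "('a \<Rightarrow> 'a \<Rightarrow> bool) \<Rightarrow> 'a set \<Rightarrow> 'a \<Rightarrow> bool" where
  "simplicial_in E S v \<longleftrightarrow> is_clique E {u \<in> S. E v u}"

definition color_partition :: "'a set \<Rightarrow> nat \<Rightarrow> (nat \<Rightarrow> 'a set) \<Rightarrow> bool" where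
  "color_partition V r Vc \<longleftrightarrow> (\<Union>i\<in>{1..r}. Vc i) = V
     \<and> (\<forall>i\<in>{1..r}. \<forall>j\<in>{1..r}. i \<noteq> j \<longrightarrow> Vc i \<inter> Vc j = {})"

definition cpeo :: "('a \<Rightarrow> 'a \<Rightarrow> bool) \<Rightarrow> nat \<Rightarrow> (nat \<Rightarrow> 'a set) \<Rightarrow> (nat \<Rightarrow> nat) \<Rightarrow> bool" where
  "cpeo E r Vc eta \<longleftrightarrow> (\<forall>i\<in>{1..r}. \<forall>v\<in>Vc (eta i).
      simplicial_in E (\<Union>j\<in>{i..r}. Vc (eta j)) v)"

definition disjoint_union_of_cliques :: "('a \<Rightarrow> 'a \<Rightarrow> bool) \<Rightarrow> 'a set \<Rightarrow> bool" where
  "disjoint_union_of_cliques E S \<longleftrightarrow> (\<exists>P. \<Union>P = S \<and> {} \<notin> P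
      \<and> (\<forall>A\<in>P. \<forall>B\<in>P. A \<noteq> B \<longrightarrow> A \<inter> B = {})
      \<and> (\<forall>A\<in>P. is_clique E A)
      \<and> (\<forall>A\<in>P. \<forall>B\<in>P. A \<noteq> B \<longrightarrow> (\<forall>u\<in>A. \<forall>w\<in>B. \<not> E u w)))"

end

theory Submission
  imports Defs
begin

text \<open>Every vertex of a colour class V_i is simplicial in the union of the classes that
  follow V_i in the elimination ordering, hence also in V_i itself. In a graph where
  every vertex is simplicial, "equal or adjacent" is transitive: two neighbours of a vertex
  lie in its neighbourhood, which is a clique. So this relation is an equivalence, and its
  classes are cliques with no edges between them.\<close>

lemma simplicial_in_subset:
  assumes "simplicial_in E T v" and "S \<subseteq> T"
  shows "simplicial_in E S v"
  using assms unfolding simplicial_in_def is_clique_def by blast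

lemma cpeo_simplicial_in_class:
  assumes "cpeo E r Vc eta" and "k \<in> {1..r}" and "v \<in> Vc (eta k)"
  shows "simplicial_in E (Vc (eta k)) v"
proof (rule simplicial_in_subset)
  show "simplicial_in E (\<Union>j\<in>{k..r}. Vc (eta j)) v"
    using assms unfolding cpeo_def by blast
  show "Vc (eta k) \<subseteq> (\<Union>j\<in>{k..r}. Vc (eta j))"
    using assms(2) by auto
qed

lemma equiv_adjacent_or_equal_if_simplicial:
  assumes sym: "\<And>u v. E u v \<Longrightarrow> E v u"
    and simplicial: "\<And>v. v \<in> S \<Longrightarrow> simplicial_in E S v"
  shows "equiv S {(u, w). u \<in> S \<and> w \<in> S \<and> (u = w \<or> E u w)}"
proof (rule equivI)
  show "trans {(u, w). u \<in> S \<and> w \<in> S \<and> (u = w \<or> E u w)}"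
  proof (rule transI)
    fix u v w
    assume "(u, v) \<in> {(u, w). u \<in> S \<and> w \<in> S \<and> (u = w \<or> E u w)}"
      and "(v, w) \<in> {(u, w). u \<in> S \<and> w \<in> S \<and> (u = w \<or> E u w)}"
    then have "u \<in> S" "v \<in> S" "w \<in> S" "u = v \<or> E u v" "v = w \<or> E v w"
      by auto
    moreover have "is_clique E {x \<in> S. E v x}"
      using simplicial \<open>v \<in> S\<close> unfolding simplicial_in_def .
    ultimately show "(u, w) \<in> {(u, w). u \<in> S \<and> w \<in> S \<and> (u = w \<or> E u w)}"
      using sym unfolding is_clique_def by blast
  qed
qed (auto simp: refl_on_def sym_def intro: sym)

lemma disjoint_union_of_cliques_if_simplicial:
  assumes sym: "\<And>u v. E u v \<Longrightarrow> E v u"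
    and simplicial: "\<And>v. v \<in> S \<Longrightarrow> simplicial_in E S v"
  shows "disjoint_union_of_cliques E S"
proof -
  define R where "R = {(u, w). u \<in> S \<and> w \<in> S \<and> (u = w \<or> E u w)}"
  have R: "equiv S R"
    unfolding R_def using sym simplicial by (rule equiv_adjacent_or_equal_if_simplicial)
  have "is_clique E X" if "X \<in> S // R" for X
    using in_quotient_imp_in_rel[OF R that] unfolding is_clique_def R_def by blast
  moreover have "\<not> E u w" if "X \<in> S // R" "Y \<in> S // R" "X \<noteq> Y" "u \<in> X" "w \<in> Y" for X Y u w
  proof
    assume "E u w"
    then have "(u, w) \<in> R"
      using that in_quotient_imp_subset[OF R] unfolding R_def by blast
    then show False
      using quotient_eqI[OF R] that by blast
  qed
  ultimately show ?thesis
    unfolding disjoint_union_of_cliques_def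
    using Union_quotient[OF R] quotient_disj[OF R] in_quotient_imp_non_empty[OF R]
    by (intro exI[of _ "S // R"]) blast
qed

theorem corollary3p3:
  fixes V :: "'a set" and E :: "'a \<Rightarrow> 'a \<Rightarrow> bool" and r :: nat
    and Vc :: "nat \<Rightarrow> 'a set" and eta :: "nat \<Rightarrow> nat"
  assumes "simple_graph V E"
    and "color_partition V r Vc"
    and "eta permutes {1..r}"
    and "cpeo E r Vc eta"
    and "i \<in> {1..r}"
  shows "disjoint_union_of_cliques E (Vc i)"
proof -
  obtain k where k: "k \<in> {1..r}" "eta k = i"
    using permutes_image[OF assms(3)] assms(5) by (metis imageE)
  have "\<And>u v. E u v \<Longrightarrow> E v u"
    using assms(1) unfolding simple_graph_def by blast
  moreover have "\<And>v. v \<in> Vc i \<Longrightarrow> simplicial_in E (Vc i) v"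
    using cpeo_simplicial_in_class[OF assms(4) k(1)] k(2) by blast
  ultimately show ?thesis
    by (rule disjoint_union_of_cliques_if_simplicial)
qed

end
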